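(* Let $\pi_0\in(0,1)$, $\sigma\in(0,0.25]$, and $\psi:[0,1]\to\mathbb{R}$ non-decreasing with $\psi(0)<\psi(1)$. For a strategy pair $(p_0,p_1)\in[0,1]^2$ define $\pi_S$, $\pi_C$, $\Phi_\theta(C,\sigma,\pi_0,p_0,p_1)$ and $\Phi_\theta(S,\sigma,\pi_0,p_0,p_1)$ as follows: $$\pi_S=\frac{(1-p_1)\pi_0}{(1-p_1)\pi_0+(1-p_0)(1-\pi_0)},\qquad \pi_C=\frac{p_1\pi_0}{p_1\pi_0+p_0(1-\pi_0)},$$ $$\Phi_\theta(C,\cdot)=0.5+2\sigma\theta+(0.5+2\sigma\theta)\psi\!\left(\tfrac{(1+4\sigma)\pi_C}{1+4\sigma\pi_C}\right)+(0.5-2\sigma\theta)\psi\!\left(\tfrac{(1-4\sigma)\pi_C}{1-4\sigma\pi_C}\right),\qquad \Phi_\theta(S,\cdot)=0.5+\psi(\pi_S).$$ A pair $(p_0,p_1)$ is an equilibrium if for each $\theta\in\{0,1\}$, $p_\theta$ maximizes $p\,\Phi_\theta(C,\sigma,\pi_0,p_0,p_1)+(1-p)\Phi_\theta(S,\sigma,\pi_0,p_0,p_1)$ over $p\in[0,1]$ (beliefs computed from $(p_0,p_1)$). If an equilibrium with $p_0,p_1\in\{0,1\}$ exists, then it is pooling, i.e. $p_0=p_1$.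
   Context: Setting: the expert knows his type $\theta\in\{0,1\}$ (competent iff $\theta=1$, prior $\pi_0$); the advisee does not. $p_\theta$ is the probability that type $\theta$ chooses the complex rule $C$ (take the action iff a condition holds, correct with probability $0.5+2\sigma\theta$) over the simple rule $S$ (take the action, correct with probability $0.5$). The advisee forms beliefs by Bayes' rule given the strategies; $\psi$ is the reputation payoff of the posterior that the expert is competent, added to the accuracy payoff. An equilibrium corresponds to a perfect Bayesian equilibrium with correct conjectures. *)

theory Defs
  imports Complex_Main
begin

text \<open>Posterior beliefs (Bayes' rule); HOL's convention x / 0 = 0 is used off path.\<close>
definition pi_S :: "real \<Rightarrow> real \<Rightarrow> real \<Rightarrow> real" where
  "pi_S pi0 p0 p1 = ((1 - p1) * pi0) / ((1 - p1) * pi0 + (1 - p0) * (1 - pi0))"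

definition pi_C :: "real \<Rightarrow> real \<Rightarrow> real \<Rightarrow> real" where
  "pi_C pi0 p0 p1 = (p1 * pi0) / (p1 * pi0 + p0 * (1 - pi0))"

definition Phi_C :: "(real \<Rightarrow> real) \<Rightarrow> real \<Rightarrow> real \<Rightarrow> real \<Rightarrow> real \<Rightarrow> real \<Rightarrow> real" where
  "Phi_C psi theta sigma pi0 p0 p1 =
     (let pc = pi_C pi0 p0 p1 in
       0.5 + 2 * sigma * theta
       + (0.5 + 2 * sigma * theta) * psi ((1 + 4 * sigma) * pc / (1 + 4 * sigma * pc))
       + (0.5 - 2 * sigma * theta) * psi ((1 - 4 * sigma) * pc / (1 - 4 * sigma * pc)))"

definition Phi_S :: "(real \<Rightarrow> real) \<Rightarrow> real \<Rightarrow> real \<Rightarrow> real \<Rightarrow> real \<Rightarrow> real \<Rightarrow> real" where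
  "Phi_S psi theta sigma pi0 p0 p1 = 0.5 + psi (pi_S pi0 p0 p1)"

definition payoff :: "(real \<Rightarrow> real) \<Rightarrow> real \<Rightarrow> real \<Rightarrow> real \<Rightarrow> real \<Rightarrow> real \<Rightarrow> real \<Rightarrow> real" where
  "payoff psi theta sigma pi0 p0 p1 p =
     p * Phi_C psi theta sigma pi0 p0 p1 + (1 - p) * Phi_S psi theta sigma pi0 p0 p1"

definition best_response :: "(real \<Rightarrow> real) \<Rightarrow> real \<Rightarrow> real \<Rightarrow> real \<Rightarrow> real \<Rightarrow> real \<Rightarrow> real \<Rightarrow> bool" where
  "best_response psi theta sigma pi0 p0 p1 p \<longleftrightarrow>
     p \<in> {0..1} \<and> (\<forall>q\<in>{0..1}. payoff psi theta sigma pi0 p0 p1 q \<le> payoff psi theta sigma pi0 p0 p1 p)"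

definition is_equilibrium :: "(real \<Rightarrow> real) \<Rightarrow> real \<Rightarrow> real \<Rightarrow> real \<Rightarrow> real \<Rightarrow> bool" where
  "is_equilibrium psi sigma pi0 p0 p1 \<longleftrightarrow>
     p0 \<in> {0..1} \<and> p1 \<in> {0..1} \<and>
     best_response psi 0 sigma pi0 p0 p1 p0 \<and> best_response psi 1 sigma pi0 p0 p1 p1"

end

theory Submission
  imports Defs
begin

text \<open>In a separating profile the chosen rule reveals the type, so the incompetent expert
  (\<open>\<theta> = 0\<close>, whose accuracy is \<open>1/2\<close> under either rule) only cares about reputation
  and gains by imitating the competent one. If the competent expert alone plays \<open>C\<close>, then
  \<open>S\<close> yields reputation \<open>\<psi> 0\<close> while \<open>C\<close> yields \<open>\<psi> 1\<close> after a success and at least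
  \<open>\<psi> 0\<close> after a failure; if he alone plays \<open>S\<close>, switching to \<open>S\<close> raises the reputation
  from \<open>\<psi> 0\<close> to \<open>\<psi> 1\<close>.\<close>

lemma best_response_payoff_le:
  assumes "best_response psi theta sigma pi0 p0 p1 p" "q \<in> {0..1}"
  shows "payoff psi theta sigma pi0 p0 p1 q \<le> payoff psi theta sigma pi0 p0 p1 p"
  using assms unfolding best_response_def by blast

lemma payoff_pure [simp]:
  "payoff psi theta sigma pi0 p0 p1 1 = Phi_C psi theta sigma pi0 p0 p1"
  "payoff psi theta sigma pi0 p0 p1 0 = Phi_S psi theta sigma pi0 p0 p1"
  by (simp_all add: payoff_def)

lemma separating_beliefs_competent_complex:
  assumes "pi0 \<noteq> 0"
  shows "pi_C pi0 0 1 = 1" "pi_S pi0 0 1 = 0"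
  using assms by (simp_all add: pi_C_def pi_S_def)

lemma separating_beliefs_competent_simple:
  assumes "pi0 \<noteq> 0"
  shows "pi_C pi0 1 0 = 0" "pi_S pi0 1 0 = 1"
  using assms by (simp_all add: pi_C_def pi_S_def)

text \<open>At \<open>\<sigma> = 1/4\<close> a failure under \<open>C\<close> yields the belief \<open>0 / 0 = 0\<close> rather than \<open>1\<close>.\<close>
lemma le_psi_div_self:
  fixes psi :: "real \<Rightarrow> real"
  assumes "psi 0 \<le> psi 1"
  shows "psi 0 \<le> psi (x / x)"
  using assms by (cases "x = 0") simp_all

lemma incompetent_prefers_complex_when_competent_does:
  assumes "pi0 \<noteq> 0" "0 \<le> sigma" "psi 0 < psi 1"
  shows "Phi_S psi 0 sigma pi0 0 1 < Phi_C psi 0 sigma pi0 0 1"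
proof -
  have "psi 0 \<le> psi ((1 - 4 * sigma) / (1 - 4 * sigma))"
    using assms(3) by (intro le_psi_div_self) simp
  moreover have "(1 + 4 * sigma) / (1 + 4 * sigma) = 1"
    using assms(2) by simp
  ultimately show ?thesis
    using assms(3)
    by (simp add: Phi_C_def Phi_S_def separating_beliefs_competent_complex[OF assms(1)])
qed

lemma incompetent_prefers_simple_when_competent_does:
  assumes "pi0 \<noteq> 0" "psi 0 < psi 1"
  shows "Phi_C psi 0 sigma pi0 1 0 < Phi_S psi 0 sigma pi0 1 0"
  using assms(2)
  by (simp add: Phi_C_def Phi_S_def separating_beliefs_competent_simple[OF assms(1)])

theorem proposition7:
  fixes pi0 sigma p0 p1 :: real and psi :: "real \<Rightarrow> real"
  assumes "0 < pi0" "pi0 < 1"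
    and "0 < sigma" "sigma \<le> 0.25"
    and "mono_on {0..1} psi" "psi 0 < psi 1"
    and "p0 \<in> {0, 1}" "p1 \<in> {0, 1}"
    and "is_equilibrium psi sigma pi0 p0 p1"
  shows "p0 = p1"
proof (rule ccontr)
  assume "p0 \<noteq> p1"
  with assms(7,8) consider "p0 = 0" "p1 = 1" | "p0 = 1" "p1 = 0"
    by auto
  moreover have incompetent_best: "payoff psi 0 sigma pi0 p0 p1 q \<le> payoff psi 0 sigma pi0 p0 p1 p0"
    if "q \<in> {0..1}" for q
    using assms(9) that by (auto simp: is_equilibrium_def intro: best_response_payoff_le)
  ultimately show False
  proof cases
    case 1
    then show False
      using incompetent_best[of 1] assms(1,3,6)
        incompetent_prefers_complex_when_competent_does[of pi0 sigma psi] by simp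
  next
    case 2
    then show False
      using incompetent_best[of 0] assms(1,6)
        incompetent_prefers_simple_when_competent_does[of pi0 psi sigma] by simp
  qed
qed

end
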